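(* Let $A,B,C$ be smooth functions on $[0,1]$ and consider the Abel equation $$\frac{dx}{dt}=A(t)x^3+B(t)x^2+C(t)x,\qquad t\in[0,1].$$ Assume that $\int_0^1C(t)\,dt=0$ and that there exist real numbers $a,b$ such that the function $$aA(t)\exp\left(\int_0^tC(s)\,ds\right)+bB(t)$$ does not vanish identically and does not change sign on $[0,1]$. Then the equation has at most one non-zero periodic orbit, and when this periodic orbit exists it is hyperbolic.
   Context: A periodic orbit is a solution $x(t)$ defined on all of $[0,1]$ with $x(0)=x(1)$; $x\equiv0$ is always one, and non-zero periodic orbits are the others. The Poincaré map is $\Pi(x_0)=x(1;x_0)$ where $x(t;x_0)$ is the solution with $x(0;x_0)=x_0$; a periodic orbit with initial condition $x_0$ is hyperbolic if $\Pi'(x_0)\ne1$. *)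

theory Defs
  imports "HOL-Analysis.Analysis"
begin

definition smooth_on :: "real set \<Rightarrow> (real \<Rightarrow> real) \<Rightarrow> bool" where
  "smooth_on S f \<longleftrightarrow> (\<exists>D. D 0 = f \<and>
      (\<forall>n. \<forall>t\<in>S. (D n has_real_derivative D (Suc n) t) (at t within S)))"

definition abel_sol :: "(real \<Rightarrow> real) \<Rightarrow> (real \<Rightarrow> real) \<Rightarrow> (real \<Rightarrow> real) \<Rightarrow> (real \<Rightarrow> real) \<Rightarrow> bool" where
  "abel_sol A B C x \<longleftrightarrow> (\<forall>t\<in>{0..1}.
      (x has_real_derivative (A t * (x t)^3 + B t * (x t)^2 + C t * x t)) (at t within {0..1}))"

definition periodic_orbit :: "(real \<Rightarrow> real) \<Rightarrow> (real \<Rightarrow> real) \<Rightarrow> (real \<Rightarrow> real) \<Rightarrow> (real \<Rightarrow> real) \<Rightarrow> bool" where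
  "periodic_orbit A B C x \<longleftrightarrow> abel_sol A B C x \<and> x 0 = x 1"

definition nonzero_on01 :: "(real \<Rightarrow> real) \<Rightarrow> bool" where
  "nonzero_on01 x \<longleftrightarrow> (\<exists>t\<in>{0..1}. x t \<noteq> 0)"

definition poincare :: "(real \<Rightarrow> real) \<Rightarrow> (real \<Rightarrow> real) \<Rightarrow> (real \<Rightarrow> real) \<Rightarrow> real \<Rightarrow> real" where
  "poincare A B C x0 = (THE y. \<exists>x. abel_sol A B C x \<and> x 0 = x0 \<and> x 1 = y)"

end

theory Submission
  imports Defs
begin

text \<open>Write \<open>E t = exp (integral {0..t} C)\<close> and \<open>W = a A E + b B\<close>, of constant sign, say \<open>W \<ge> 0\<close>.
  A non-zero periodic orbit \<open>x\<close> never vanishes, and \<open>(b x - a E) exp (- integral (C + A x\<^sup>2))\<close> has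
  derivative \<open>x\<^sup>2 W exp (- integral (C + A x\<^sup>2)) \<ge> 0\<close>, not identically zero; comparing its values
  at \<open>0\<close> and \<open>1\<close> shows that \<open>b x - a E\<close> never vanishes and that \<open>integral (C + A x\<^sup>2) \<noteq> 0\<close>.
  Since \<open>integral (A x\<^sup>2 + B x + C) = 0\<close> along the orbit and \<open>integral C = 0\<close>, the latter integral is
  also \<open>integral (3 A x\<^sup>2 + 2 B x + C)\<close>, the logarithm of the derivative of the Poincare map: the
  orbit is hyperbolic.  For uniqueness, \<open>u = - E / x\<close> satisfies \<open>u' = E (A x + B)\<close>, which makes
  \<open>integral (E\<^sup>2 (A x + B) / (b x - a E))\<close> vanish along every such orbit.  For two distinct orbits
  \<open>x\<close>, \<open>y\<close> the difference of these integrands is \<open>W E\<^sup>2 (y - x) / ((b x - a E) (b y - a E))\<close>,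
  a nonnegative weight times a function of constant sign, whose integral cannot vanish.
  Differentiability of the Poincare map needs solutions for all nearby initial values; they come
  from a Picard iteration for the deviation from \<open>x\<close>, with the nonlinearity clipped.\<close>

section \<open>Calculus on the unit interval\<close>

lemma smooth_on_imp_continuous_on: "smooth_on S f \<Longrightarrow> continuous_on S f"
  unfolding smooth_on_def by (metis DERIV_continuous_on)

lemma has_integral_derivative_subinterval:
  fixes Q q :: "real \<Rightarrow> real"
  assumes "a \<le> b" "{a..b} \<subseteq> S"
    and "\<And>s. s \<in> S \<Longrightarrow> (Q has_real_derivative q s) (at s within S)"
  shows "(q has_integral (Q b - Q a)) {a..b}"
proof (rule fundamental_theorem_of_calculus[OF assms(1)])
  fix s assume "s \<in> {a..b}"
  with assms(2,3) have "(Q has_real_derivative q s) (at s within {a..b})"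
    by (meson DERIV_subset subsetD)
  then show "(Q has_vector_derivative q s) (at s within {a..b})"
    by (simp add: has_real_derivative_iff_has_vector_derivative)
qed

lemma periodic_derivative_has_integral_0:
  fixes Q q :: "real \<Rightarrow> real"
  assumes "\<And>s. s \<in> {0..1} \<Longrightarrow> (Q has_real_derivative q s) (at s within {0..1})" "Q 1 = Q 0"
  shows "(q has_integral 0) {0..1}"
  using has_integral_derivative_subinterval[of 0 1 "{0..1}" Q q] assms by simp

lemma exp_integral_has_real_derivative:
  fixes p :: "real \<Rightarrow> real"
  assumes "continuous_on {0..1} p" "t \<in> {0..1}"
  shows "((\<lambda>t. exp (integral {0..t} p)) has_real_derivative p t * exp (integral {0..t} p))
    (at t within {0..1})"
  using DERIV_chain2[OF DERIV_exp integral_has_real_derivative[OF assms]] by (simp add: mult.commute)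

lemma exp_neg_integral_has_real_derivative:
  fixes p :: "real \<Rightarrow> real"
  assumes "continuous_on {0..1} p" "t \<in> {0..1}"
  shows "((\<lambda>t. exp (- integral {0..t} p)) has_real_derivative - p t * exp (- integral {0..t} p))
    (at t within {0..1})"
  using exp_integral_has_real_derivative[OF continuous_on_minus[OF assms(1)] assms(2)] by simp

lemma linear_ode_solution_eq:
  fixes w k :: "real \<Rightarrow> real"
  assumes k: "continuous_on {0..1} k"
    and w: "\<And>s. s \<in> {0..1} \<Longrightarrow> (w has_real_derivative k s * w s) (at s within {0..1})"
    and t: "t \<in> {0..1}"
  shows "w t = w 0 * exp (integral {0..t} k)"
proof -
  define Q where "Q s = w s * exp (- integral {0..s} k)" for s
  have dQ: "(Q has_real_derivative 0) (at s within {0..1})" if "s \<in> {0..1}" for s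
    unfolding Q_def using DERIV_mult[OF w[OF that] exp_neg_integral_has_real_derivative[OF k that]]
    by (rule DERIV_cong) (simp add: algebra_simps)
  have "((\<lambda>_. 0) has_integral (Q t - Q 0)) {0..t}"
    by (rule has_integral_derivative_subinterval[of 0 t "{0..1}"]) (use t dQ in auto)
  then have "Q t = Q 0" using has_integral_unique[OF _ has_integral_0] by simp
  then show ?thesis unfolding Q_def by (simp add: exp_minus field_simps)
qed

lemma linear_ode_periodic_integral_0:
  fixes w k :: "real \<Rightarrow> real"
  assumes k: "continuous_on {0..1} k"
    and w: "\<And>s. s \<in> {0..1} \<Longrightarrow> (w has_real_derivative k s * w s) (at s within {0..1})"
    and "w 1 = w 0" "w 0 \<noteq> 0"
  shows "(k has_integral 0) {0..1}"
proof -
  have "exp (integral {0..1} k) = 1" using linear_ode_solution_eq[OF k w, of 1] assms(3,4) by simp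
  then show ?thesis using integrable_integral[OF integrable_continuous_real[OF k]] by simp
qed

lemma linear_ode_growth_bound:
  fixes w k :: "real \<Rightarrow> real"
  assumes k: "continuous_on {0..1} k"
    and w: "\<And>s. s \<in> {0..1} \<Longrightarrow> (w has_real_derivative k s * w s) (at s within {0..1})"
    and M: "\<And>s. s \<in> {0..1} \<Longrightarrow> \<bar>k s\<bar> \<le> M"
    and t: "t \<in> {0..1}"
  shows "\<bar>w t\<bar> \<le> exp M * \<bar>w 0\<bar>"
proof -
  have "k integrable_on {0..t}"
    by (rule integrable_continuous_real, rule continuous_on_subset[OF k]) (use t in auto)
  then have "norm (integral {0..t} k) \<le> integral {0..t} (\<lambda>_. M)"
    by (rule integral_norm_bound_integral) (use M t in auto)
  also have "\<dots> = t * M" using t by simp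
  also have "\<dots> \<le> M" using t M[of 0] by (simp add: mult_left_le_one_le)
  finally have "exp (integral {0..t} k) \<le> exp M" by simp
  then have "\<bar>w 0\<bar> * exp (integral {0..t} k) \<le> \<bar>w 0\<bar> * exp M" by (rule mult_left_mono) simp
  then show ?thesis using linear_ode_solution_eq[OF k w t] by (simp add: abs_mult mult.commute)
qed

lemma continuous_nonvanishing_sign_cases:
  fixes f :: "real \<Rightarrow> real"
  assumes "continuous_on {a..b} f" "\<And>t. t \<in> {a..b} \<Longrightarrow> f t \<noteq> 0"
  shows "(\<forall>t\<in>{a..b}. 0 < f t) \<or> (\<forall>t\<in>{a..b}. f t < 0)"
proof (rule ccontr)
  assume "\<not> ?thesis"
  then obtain s1 s2 where s: "s1 \<in> {a..b}" "s2 \<in> {a..b}" "f s1 < 0" "0 < f s2"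
    using assms(2) by (meson linorder_neqE_linordered_idom)
  have "connected (f ` {a..b})" by (intro connected_continuous_image assms(1) connected_Icc)
  then have "0 \<in> f ` {a..b}"
    unfolding connected_iff_interval using s by (meson imageI less_imp_le)
  then show False using assms(2) by auto
qed

lemma has_integral_pos_if_nonneg:
  fixes f :: "real \<Rightarrow> real"
  assumes "a < b" "continuous_on {a..b} f" "\<And>t. t \<in> {a..b} \<Longrightarrow> 0 \<le> f t"
    and "\<exists>t\<in>{a..b}. f t \<noteq> 0" "(f has_integral I) {a..b}"
  shows "0 < I"
proof -
  have "I = integral {a..b} f" using assms(5) by (rule integral_unique[symmetric])
  then have "I \<noteq> 0" using integral_eq_0_iff[OF assms(2,1,3)] assms(4) by auto
  moreover have "0 \<le> I" using has_integral_nonneg[OF assms(5)] assms(3) by auto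
  ultimately show ?thesis by simp
qed

lemma has_integral_nonzero_if_weighted:
  fixes g W :: "real \<Rightarrow> real"
  assumes "a < b" "continuous_on {a..b} g" "continuous_on {a..b} W"
    and "\<And>t. t \<in> {a..b} \<Longrightarrow> g t \<noteq> 0"
    and "\<And>t. t \<in> {a..b} \<Longrightarrow> 0 \<le> W t" "\<exists>t\<in>{a..b}. W t \<noteq> 0"
    and I: "((\<lambda>t. g t * W t) has_integral I) {a..b}"
  shows "I \<noteq> 0"
proof -
  have c: "continuous_on {a..b} (\<lambda>t. g t * W t)" by (intro continuous_intros assms(2,3))
  have nz: "\<exists>t\<in>{a..b}. g t * W t \<noteq> 0" using assms(4,6) by auto
  from continuous_nonvanishing_sign_cases[OF assms(2,4)] show ?thesis
  proof
    assume "\<forall>t\<in>{a..b}. 0 < g t"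
    then have "0 < I"
      using assms(5) by (intro has_integral_pos_if_nonneg[OF assms(1) c _ nz I])
        (force intro: mult_nonneg_nonneg less_imp_le)
    then show ?thesis by simp
  next
    assume "\<forall>t\<in>{a..b}. g t < 0"
    then have "0 \<le> - (g t * W t)" if "t \<in> {a..b}" for t
      using assms(5)[OF that] that by (simp add: mult_nonpos_nonneg less_imp_le)
    then have "0 < - I"
      using nz by (intro has_integral_pos_if_nonneg[OF assms(1) _ _ _ has_integral_neg[OF I]])
        (auto intro: continuous_on_minus[OF c])
    then show ?thesis by simp
  qed
qed

lemma nonneg_derivative_endpoint_bounds:
  fixes s r :: "real \<Rightarrow> real"
  assumes s: "\<And>t. t \<in> {0..1} \<Longrightarrow> (s has_real_derivative r t) (at t within {0..1})"
    and r: "continuous_on {0..1} r" "\<And>t. t \<in> {0..1} \<Longrightarrow> 0 \<le> r t" "\<exists>t\<in>{0..1}. r t \<noteq> 0"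
  shows "s 0 < s 1" and "t \<in> {0..1} \<Longrightarrow> s 0 \<le> s t \<and> s t \<le> s 1"
proof -
  have "(r has_integral (s 1 - s 0)) {0..1}"
    using has_integral_derivative_subinterval[of 0 1 "{0..1}" s r] s by simp
  then show "s 0 < s 1" using has_integral_pos_if_nonneg[OF _ r] by fastforce
  show "s 0 \<le> s t \<and> s t \<le> s 1" if t: "t \<in> {0..1}"
  proof
    have "(r has_integral (s t - s 0)) {0..t}"
      using t by (intro has_integral_derivative_subinterval[of 0 t "{0..1}" s r] s) auto
    then have "0 \<le> s t - s 0" by (rule has_integral_nonneg) (use r(2) t in auto)
    then show "s 0 \<le> s t" by simp
    have "(r has_integral (s 1 - s t)) {t..1}"
      using t by (intro has_integral_derivative_subinterval[of t 1 "{0..1}" s r] s) auto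
    then have "0 \<le> s 1 - s t" by (rule has_integral_nonneg) (use r(2) t in auto)
    then show "s t \<le> s 1" by simp
  qed
qed

lemma periodic_fraction_has_integral_0:
  fixes u u' :: "real \<Rightarrow> real"
  assumes u: "\<And>t. t \<in> {0..1} \<Longrightarrow> (u has_real_derivative u' t) (at t within {0..1})"
    and cu': "continuous_on {0..1} u'" and periodic: "u 1 = u 0"
    and nz: "\<And>t. t \<in> {0..1} \<Longrightarrow> b + a * u t \<noteq> 0"
  shows "((\<lambda>t. u t * u' t / (b + a * u t)) has_integral 0) {0..1}"
proof (cases "a = 0")
  case True
  then have "b \<noteq> 0" using nz[of 0] by simp
  have "((\<lambda>t. u t * u' t / b) has_integral 0) {0..1}"
    by (rule periodic_derivative_has_integral_0[of "\<lambda>t. (u t)\<^sup>2 / (2 * b)"])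
      (use u periodic \<open>b \<noteq> 0\<close> in \<open>auto intro!: derivative_eq_intros\<close>)
  with True show ?thesis by simp
next
  case False
  \<comment> \<open>\<open>u u' / (b + a u) = u' / a - (b / a\<^sup>2) (b + a u)' / (b + a u)\<close>, and the logarithmic derivative
    of the periodic function \<open>b + a u\<close> has integral zero.\<close>
  have cu: "continuous_on {0..1} u" using u by (rule DERIV_continuous_on)
  have log_derivative: "((\<lambda>t. a * u' t / (b + a * u t)) has_integral 0) {0..1}"
  proof (rule linear_ode_periodic_integral_0[where w = "\<lambda>t. b + a * u t"])
    show "continuous_on {0..1} (\<lambda>t. a * u' t / (b + a * u t))"
      by (intro continuous_intros cu' cu) (use nz in auto)
    fix s :: real assume s: "s \<in> {0..1}"
    show "((\<lambda>t. b + a * u t) has_real_derivative a * u' s / (b + a * u s) * (b + a * u s))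
        (at s within {0..1})"
      using DERIV_add[OF DERIV_const DERIV_cmult[OF u[OF s]]] nz[OF s] by simp
  qed (use periodic nz[of 0] in auto)
  have "(u' has_integral 0) {0..1}"
    by (rule periodic_derivative_has_integral_0[OF _ periodic]) (rule u)
  from has_integral_diff[OF has_integral_mult_right[OF this, where c = "1 / a"]
      has_integral_mult_right[OF log_derivative, where c = "b / a\<^sup>2"]]
  have "((\<lambda>t. 1 / a * u' t - b / a\<^sup>2 * (a * u' t / (b + a * u t))) has_integral 0) {0..1}"
    by simp
  then show ?thesis
  proof (rule has_integral_eq[rotated])
    fix t :: real assume "t \<in> {0..1}"
    with nz[OF this] False
    show "1 / a * u' t - b / a\<^sup>2 * (a * u' t / (b + a * u t)) = u t * u' t / (b + a * u t)"
      by (simp add: divide_simps power2_eq_square) (simp add: algebra_simps)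
  qed
qed

section \<open>Existence of solutions\<close>

lemma exp_weighted_integral_bound:
  fixes f :: "real \<Rightarrow> real"
  assumes K: "0 < K" and \<tau>: "0 \<le> \<tau>" and f: "f integrable_on {0..\<tau>}"
    and bound: "\<And>s. s \<in> {0..\<tau>} \<Longrightarrow> \<bar>f s\<bar> \<le> c * exp (K * s)"
  shows "exp (- K * \<tau>) * \<bar>integral {0..\<tau>} f\<bar> \<le> c / K"
proof -
  have "\<bar>f 0\<bar> \<le> c" using bound[of 0] \<tau> by simp
  then have c: "0 \<le> c" by (rule order_trans[OF abs_ge_zero])
  have prim: "((\<lambda>s. c * exp (K * s)) has_integral (c / K * exp (K * \<tau>) - c / K * exp (K * 0))) {0..\<tau>}"
    by (rule has_integral_derivative_subinterval[of 0 \<tau> "{0..\<tau>}"])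
      (use K \<tau> in \<open>auto intro!: derivative_eq_intros\<close>)
  have "norm (integral {0..\<tau>} f) \<le> integral {0..\<tau>} (\<lambda>s. c * exp (K * s))"
    by (rule integral_norm_bound_integral[OF f has_integral_integrable[OF prim]]) (use bound in auto)
  then have "exp (- K * \<tau>) * \<bar>integral {0..\<tau>} f\<bar> \<le> exp (- K * \<tau>) * (c / K * exp (K * \<tau>) - c / K)"
    using integral_unique[OF prim] by (intro mult_left_mono) auto
  also have "\<dots> = c / K - c / K * exp (- K * \<tau>)" by (simp add: algebra_simps flip: exp_add)
  also have "\<dots> \<le> c / K" using K c by simp
  finally show ?thesis .
qed

lemma weighted_volterra_lipschitz:
  fixes F :: "real \<Rightarrow> real \<Rightarrow> real" and v1 v2 :: "real \<Rightarrow> real"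
  assumes L: "0 < L"
    and lip: "\<And>t u v. t \<in> {0..1} \<Longrightarrow> \<bar>F t u - F t v\<bar> \<le> L * \<bar>u - v\<bar>"
    and int: "(\<lambda>s. F s (exp (2 * L * s) * v1 s) - F s (exp (2 * L * s) * v2 s)) integrable_on {0..\<tau>}"
    and \<tau>: "\<tau> \<in> {0..1}" and d: "\<And>s. s \<in> {0..\<tau>} \<Longrightarrow> \<bar>v1 s - v2 s\<bar> \<le> d"
  shows "exp (- (2 * L) * \<tau>)
    * \<bar>integral {0..\<tau>} (\<lambda>s. F s (exp (2 * L * s) * v1 s) - F s (exp (2 * L * s) * v2 s))\<bar> \<le> d / 2"
proof -
  have "\<bar>F s (exp (2 * L * s) * v1 s) - F s (exp (2 * L * s) * v2 s)\<bar> \<le> (L * d) * exp (2 * L * s)"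
    if s: "s \<in> {0..\<tau>}" for s
  proof -
    have "\<bar>F s (exp (2 * L * s) * v1 s) - F s (exp (2 * L * s) * v2 s)\<bar>
        \<le> L * \<bar>exp (2 * L * s) * v1 s - exp (2 * L * s) * v2 s\<bar>"
      by (rule lip) (use s \<tau> in auto)
    also have "\<dots> = L * (exp (2 * L * s) * \<bar>v1 s - v2 s\<bar>)"
      by (simp add: abs_mult flip: right_diff_distrib)
    also have "\<dots> \<le> L * (exp (2 * L * s) * d)"
      using d[OF s] L by simp
    finally show ?thesis by (simp add: mult_ac)
  qed
  then have "exp (- (2 * L) * \<tau>)
      * \<bar>integral {0..\<tau>} (\<lambda>s. F s (exp (2 * L * s) * v1 s) - F s (exp (2 * L * s) * v2 s))\<bar>
      \<le> L * d / (2 * L)"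
    using \<tau> L by (intro exp_weighted_integral_bound int) auto
  then show ?thesis using L by simp
qed

lemma weighted_integral_equation_solvable:
  fixes F :: "real \<Rightarrow> real \<Rightarrow> real"
  assumes L: "0 < L"
    and lip: "\<And>t u v. t \<in> {0..1} \<Longrightarrow> \<bar>F t u - F t v\<bar> \<le> L * \<bar>u - v\<bar>"
    and cont: "\<And>v. continuous_on {0..1} v \<Longrightarrow> continuous_on {0..1} (\<lambda>s. F s (v s))"
  obtains v where "continuous_on {0..1} v" "\<And>t. t \<in> {0..1} \<Longrightarrow>
    v t = exp (- (2 * L) * t) * (\<xi> + integral {0..t} (\<lambda>s. F s (exp (2 * L * s) * v s)))"
proof -
  define g where "g v s = F s (exp (2 * L * s) * v s)" for v :: "real \<Rightarrow> real" and s
  define h where "h v t = exp (- (2 * L) * t) * (\<xi> + integral {0..t} (g v))" for v t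
  have gc: "continuous_on {0..1} (g v)" if "continuous_on {0..1} v" for v
    unfolding g_def by (intro cont continuous_intros that)
  have hc: "continuous_on (cbox 0 1) (h v)" if "continuous_on {0..1} v" for v
    unfolding h_def cbox_interval
    by (intro continuous_intros indefinite_integral_continuous_1 integrable_continuous_real gc that)
  \<comment> \<open>The Picard operator, made total on bounded continuous functions by clamping to \<open>[0, 1]\<close>;
    the weight \<open>exp (- 2 L t)\<close> makes it a contraction of ratio \<open>1 / 2\<close>.\<close>
  define T where "T v = (SOME u. \<forall>t. apply_bcontfun u t = h v (clamp 0 1 t))" for v :: "real \<Rightarrow>\<^sub>C real"
  have T: "apply_bcontfun (T v) t = h v (clamp 0 1 t)" for v t
  proof -
    obtain u :: "real \<Rightarrow>\<^sub>C real" where "\<And>t. u t = h v (clamp 0 1 t)"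
      using continuous_on_cbox_bcontfunE[OF hc[OF continuous_on_apply_bcontfun]] by blast
    then have "\<exists>u. \<forall>t. apply_bcontfun u t = h v (clamp 0 1 t)" by blast
    from someI_ex[OF this] show ?thesis unfolding T_def by blast
  qed
  have "dist (T v1) (T v2) \<le> (1/2) * dist v1 v2" for v1 v2
  proof (rule dist_bound)
    fix t
    define \<tau> :: real where "\<tau> = clamp 0 1 t"
    have \<tau>: "\<tau> \<in> {0..1}" using clamp_in_interval[of 0 1 t] by (simp add: \<tau>_def)
    have int: "g v integrable_on {0..\<tau>}" for v :: "real \<Rightarrow>\<^sub>C real"
      by (rule integrable_continuous_real, rule continuous_on_subset[OF gc]) (use \<tau> in auto)
    have "exp (- (2 * L) * \<tau>) * \<bar>integral {0..\<tau>} (\<lambda>s. g v1 s - g v2 s)\<bar> \<le> dist v1 v2 / 2"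
      unfolding g_def using \<tau> dist_bounded[of v1 _ v2] integrable_diff[OF int int]
      by (intro weighted_volterra_lipschitz L lip) (auto simp: g_def dist_real_def)
    moreover have "dist (T v1 t) (T v2 t)
        = exp (- (2 * L) * \<tau>) * \<bar>integral {0..\<tau>} (\<lambda>s. g v1 s - g v2 s)\<bar>"
      unfolding T h_def \<tau>_def[symmetric] dist_real_def integral_diff[OF int int]
      by (simp add: abs_mult flip: right_diff_distrib)
    ultimately show "dist (T v1 t) (T v2 t) \<le> (1/2) * dist v1 v2" by simp
  qed
  then obtain v where "T v = v" using banach_fix_type[of "1/2" T] by auto
  then have "apply_bcontfun v t = exp (- (2 * L) * t)
      * (\<xi> + integral {0..t} (\<lambda>s. F s (exp (2 * L * s) * apply_bcontfun v s)))"
    if "t \<in> {0..1}" for t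
    using T[of v t] that by (simp add: h_def g_def[abs_def])
  then show ?thesis by (rule that[OF continuous_on_apply_bcontfun])
qed

lemma lipschitz_ode_exists:
  fixes F :: "real \<Rightarrow> real \<Rightarrow> real"
  assumes L: "0 < L"
    and lip: "\<And>t u v. t \<in> {0..1} \<Longrightarrow> \<bar>F t u - F t v\<bar> \<le> L * \<bar>u - v\<bar>"
    and cont: "\<And>v. continuous_on {0..1} v \<Longrightarrow> continuous_on {0..1} (\<lambda>s. F s (v s))"
  obtains w where "w 0 = \<xi>"
    "\<And>t. t \<in> {0..1} \<Longrightarrow> (w has_real_derivative F t (w t)) (at t within {0..1})"
proof -
  obtain v where cv: "continuous_on {0..1} v" and v: "\<And>t. t \<in> {0..1} \<Longrightarrow>
      v t = exp (- (2 * L) * t) * (\<xi> + integral {0..t} (\<lambda>s. F s (exp (2 * L * s) * v s)))"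
    using weighted_integral_equation_solvable[OF L lip cont] by blast
  define g where "g s = F s (exp (2 * L * s) * v s)" for s
  define w where "w t = \<xi> + integral {0..t} g" for t
  have gc: "continuous_on {0..1} g" unfolding g_def by (intro cont continuous_intros cv)
  show ?thesis
  proof
    show "w 0 = \<xi>" by (simp add: w_def)
    fix t :: real assume t: "t \<in> {0..1}"
    have "exp (2 * L * t) * v t = w t"
      using v[OF t] by (simp add: w_def g_def[abs_def] flip: mult.assoc exp_add)
    then have "g t = F t (w t)" by (simp add: g_def)
    moreover have "(w has_real_derivative g t) (at t within {0..1})"
      unfolding w_def[abs_def] using DERIV_add[OF DERIV_const integral_has_real_derivative[OF gc t]]
      by simp
    ultimately show "(w has_real_derivative F t (w t)) (at t within {0..1})" by simp
  qed
qed

lemma cubic_difference_bound: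
  fixes a b e u v :: real
  assumes u: "\<bar>u\<bar> \<le> 1" and v: "\<bar>v\<bar> \<le> 1"
  shows "\<bar>u * (a + b * u + e * u\<^sup>2) - v * (a + b * v + e * v\<^sup>2)\<bar>
    \<le> (\<bar>a\<bar> + 2 * \<bar>b\<bar> + 3 * \<bar>e\<bar>) * \<bar>u - v\<bar>"
proof -
  have "\<bar>u * v\<bar> \<le> 1" "u\<^sup>2 \<le> 1" "v\<^sup>2 \<le> 1"
    using u v by (simp_all add: abs_mult mult_le_one abs_square_le_1)
  then have "\<bar>u\<^sup>2 + u * v + v\<^sup>2\<bar> \<le> 3"
    unfolding abs_le_iff using zero_le_power2[of u] zero_le_power2[of v] by linarith
  moreover have "\<bar>u + v\<bar> \<le> 2" using u v by linarith
  ultimately have "\<bar>b\<bar> * \<bar>u + v\<bar> \<le> \<bar>b\<bar> * 2" "\<bar>e\<bar> * \<bar>u\<^sup>2 + u * v + v\<^sup>2\<bar> \<le> \<bar>e\<bar> * 3"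
    by (simp_all add: mult_left_mono)
  then have "\<bar>a + b * (u + v) + e * (u\<^sup>2 + u * v + v\<^sup>2)\<bar> \<le> \<bar>a\<bar> + 2 * \<bar>b\<bar> + 3 * \<bar>e\<bar>"
    using abs_triangle_ineq[of a "b * (u + v)"]
      abs_triangle_ineq[of "a + b * (u + v)" "e * (u\<^sup>2 + u * v + v\<^sup>2)"]
    unfolding abs_mult by linarith
  moreover have "u * (a + b * u + e * u\<^sup>2) - v * (a + b * v + e * v\<^sup>2)
      = (a + b * (u + v) + e * (u\<^sup>2 + u * v + v\<^sup>2)) * (u - v)"
    by algebra
  ultimately show ?thesis by (simp add: abs_mult mult_right_mono)
qed

definition clip :: "real \<Rightarrow> real" where
  "clip u = max (-1) (min 1 u)"

lemma clipped_cubic_ode_exists: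
  fixes p q r :: "real \<Rightarrow> real"
  assumes cp: "continuous_on {0..1} p" and cq: "continuous_on {0..1} q"
    and cr: "continuous_on {0..1} r"
  obtains w where "w 0 = \<delta>" "\<And>t. t \<in> {0..1} \<Longrightarrow> (w has_real_derivative
      clip (w t) * (p t + q t * clip (w t) + r t * (clip (w t))\<^sup>2)) (at t within {0..1})"
proof -
  define F where "F t u = clip u * (p t + q t * clip u + r t * (clip u)\<^sup>2)" for t u
  have "continuous_on {0..1} (\<lambda>t. \<bar>p t\<bar> + 2 * \<bar>q t\<bar> + 3 * \<bar>r t\<bar>)"
    by (intro continuous_intros cp cq cr)
  then obtain M where M0: "0 \<le> M"
    and bound: "\<And>t. t \<in> {0..1} \<Longrightarrow> norm (\<bar>p t\<bar> + 2 * \<bar>q t\<bar> + 3 * \<bar>r t\<bar>) \<le> M"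
    using continuous_on_compact_bound[OF compact_Icc] by blast
  have lip: "\<bar>F t u - F t v\<bar> \<le> (M + 1) * \<bar>u - v\<bar>" if t: "t \<in> {0..1}" for t u v
  proof -
    have "\<bar>F t u - F t v\<bar> \<le> (\<bar>p t\<bar> + 2 * \<bar>q t\<bar> + 3 * \<bar>r t\<bar>) * \<bar>clip u - clip v\<bar>"
      unfolding F_def by (rule cubic_difference_bound) (simp_all add: clip_def)
    also have "\<dots> \<le> (M + 1) * \<bar>u - v\<bar>"
    proof (rule mult_mono)
      show "\<bar>clip u - clip v\<bar> \<le> \<bar>u - v\<bar>" by (simp add: clip_def abs_le_iff) linarith
    qed (use bound[OF t] in auto)
    finally show ?thesis .
  qed
  have cont: "continuous_on {0..1} (\<lambda>s. F s (v s))" if "continuous_on {0..1} v" for v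
    unfolding F_def clip_def by (intro continuous_intros cp cq cr that)
  have L: "0 < M + 1" using M0 by simp
  obtain w where "w 0 = \<delta>"
    "\<And>t. t \<in> {0..1} \<Longrightarrow> (w has_real_derivative F t (w t)) (at t within {0..1})"
    using lipschitz_ode_exists[OF L lip cont, where \<xi> = \<delta>] by blast
  then show ?thesis unfolding F_def by (rule that)
qed

lemma cubic_ode_small_solutions:
  fixes p q r :: "real \<Rightarrow> real"
  assumes cp: "continuous_on {0..1} p" and cq: "continuous_on {0..1} q"
    and cr: "continuous_on {0..1} r"
  obtains M where "0 \<le> M"
    "\<And>\<delta>. \<bar>\<delta>\<bar> < exp (- M) \<Longrightarrow> \<exists>w. w 0 = \<delta> \<and> (\<forall>t\<in>{0..1}.
        (w has_real_derivative w t * (p t + q t * w t + r t * (w t)\<^sup>2)) (at t within {0..1})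
        \<and> \<bar>w t\<bar> \<le> exp M * \<bar>\<delta>\<bar>)"
proof -
  have "continuous_on {0..1} (\<lambda>t. \<bar>p t\<bar> + \<bar>q t\<bar> + \<bar>r t\<bar>)" by (intro continuous_intros cp cq cr)
  then obtain M where M0: "0 \<le> M"
    and bound: "\<And>t. t \<in> {0..1} \<Longrightarrow> norm (\<bar>p t\<bar> + \<bar>q t\<bar> + \<bar>r t\<bar>) \<le> M"
    using continuous_on_compact_bound[OF compact_Icc] by blast
  show ?thesis
  proof (rule that[OF M0])
    fix \<delta> :: real assume \<delta>: "\<bar>\<delta>\<bar> < exp (- M)"
    \<comment> \<open>Clipping makes the field globally Lipschitz; a posteriori the solution stays in
      \<open>[-1, 1]\<close>, so the clipping is invisible.\<close>
    obtain w where w0: "w 0 = \<delta>" and w: "\<And>t. t \<in> {0..1} \<Longrightarrow> (w has_real_derivative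
        clip (w t) * (p t + q t * clip (w t) + r t * (clip (w t))\<^sup>2)) (at t within {0..1})"
      using clipped_cubic_ode_exists[OF cp cq cr] by blast
    define P where "P t = p t + q t * clip (w t) + r t * (clip (w t))\<^sup>2" for t
    define k where "k t = P t / max 1 \<bar>w t\<bar>" for t
    have cw: "continuous_on {0..1} w" using w by (rule DERIV_continuous_on)
    have ck: "continuous_on {0..1} k"
      unfolding k_def P_def clip_def by (intro continuous_intros cp cq cr cw) auto
    have "clip u * Q = Q / max 1 \<bar>u\<bar> * u" for u Q
      by (auto simp: clip_def field_simps max_def min_def abs_if)
    then have wk: "(w has_real_derivative k t * w t) (at t within {0..1})" if "t \<in> {0..1}" for t
      using w[OF that] by (simp add: k_def P_def)
    have kM: "\<bar>k t\<bar> \<le> M" if "t \<in> {0..1}" for t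
    proof -
      have "\<bar>clip (w t)\<bar> \<le> 1" by (simp add: clip_def)
      then have "\<bar>q t * clip (w t)\<bar> \<le> \<bar>q t\<bar>" "\<bar>r t * (clip (w t))\<^sup>2\<bar> \<le> \<bar>r t\<bar>"
        by (simp_all add: abs_mult mult_left_le abs_square_le_1)
      moreover have "\<bar>p t\<bar> + \<bar>q t\<bar> + \<bar>r t\<bar> \<le> M" using bound[OF that] by simp
      ultimately have "\<bar>P t\<bar> \<le> M" unfolding P_def by (smt (verit) abs_triangle_ineq)
      then show ?thesis by (simp add: k_def abs_div divide_le_eq) (smt (verit) mult_le_cancel_left1)
    qed
    have small: "\<bar>w t\<bar> \<le> exp M * \<bar>\<delta>\<bar>" if "t \<in> {0..1}" for t
      using linear_ode_growth_bound[OF ck wk kM that] w0 by simp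
    have "exp M * \<bar>\<delta>\<bar> < 1"
      using \<delta> by (simp add: exp_minus field_simps)
    then have "clip (w t) = w t" if "t \<in> {0..1}" for t
      using small[OF that] by (simp add: clip_def)
    then show "\<exists>w. w 0 = \<delta> \<and> (\<forall>t\<in>{0..1}.
        (w has_real_derivative w t * (p t + q t * w t + r t * (w t)\<^sup>2)) (at t within {0..1})
        \<and> \<bar>w t\<bar> \<le> exp M * \<bar>\<delta>\<bar>)"
      using w w0 small by (intro exI[of _ w]) auto
  qed
qed

section \<open>Solutions of the Abel equation\<close>

lemma abel_sol_continuous_on: "abel_sol A B C x \<Longrightarrow> continuous_on {0..1} x"
  unfolding abel_sol_def by (rule DERIV_continuous_on) auto

lemma abel_sol_linear_form:
  assumes "abel_sol A B C x" "t \<in> {0..1}"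
  shows "(x has_real_derivative (A t * (x t)\<^sup>2 + B t * x t + C t) * x t) (at t within {0..1})"
  using assms(1)[unfolded abel_sol_def, rule_format, OF assms(2)]
  by (rule DERIV_cong) (simp add: algebra_simps power2_eq_square power3_eq_cube)

locale continuous_abel =
  fixes A B C :: "real \<Rightarrow> real"
  assumes cont_A: "continuous_on {0..1} A"
    and cont_B: "continuous_on {0..1} B"
    and cont_C: "continuous_on {0..1} C"
begin

text \<open>Difference quotient of the right-hand side of the equation; \<open>slope x x\<close> is the coefficient
  of the variational equation along \<open>x\<close>.\<close>
definition slope :: "(real \<Rightarrow> real) \<Rightarrow> (real \<Rightarrow> real) \<Rightarrow> real \<Rightarrow> real" where
  "slope x y s = A s * ((x s)\<^sup>2 + x s * y s + (y s)\<^sup>2) + B s * (x s + y s) + C s"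

lemma continuous_on_slope:
  "continuous_on {0..1} x \<Longrightarrow> continuous_on {0..1} y \<Longrightarrow> continuous_on {0..1} (slope x y)"
  unfolding slope_def by (intro continuous_intros cont_A cont_B cont_C)

lemma abel_sol_diff_eq:
  assumes x: "abel_sol A B C x" and y: "abel_sol A B C y" and t: "t \<in> {0..1}"
  shows "y t - x t = (y 0 - x 0) * exp (integral {0..t} (slope x y))"
proof -
  have "((\<lambda>s. y s - x s) has_real_derivative slope x y s * (y s - x s)) (at s within {0..1})"
    if "s \<in> {0..1}" for s
    using DERIV_diff[OF y[unfolded abel_sol_def, rule_format, OF that]
        x[unfolded abel_sol_def, rule_format, OF that]]
    by (rule DERIV_cong) (simp add: slope_def algebra_simps power2_eq_square power3_eq_cube)
  from linear_ode_solution_eq[OF continuous_on_slope this t] show ?thesis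
    using abel_sol_continuous_on[OF x] abel_sol_continuous_on[OF y] by simp
qed

lemma abel_sol_unique:
  assumes "abel_sol A B C x" "abel_sol A B C y" "y 0 = x 0" "t \<in> {0..1}"
  shows "y t = x t"
  using abel_sol_diff_eq[OF assms(1,2,4)] assms(3) by simp

lemma poincare_eq:
  assumes "abel_sol A B C x"
  shows "poincare A B C (x 0) = x 1"
  unfolding poincare_def
proof (rule the_equality)
  show "\<exists>y. abel_sol A B C y \<and> y 0 = x 0 \<and> y 1 = x 1" using assms by (intro exI[of _ x]) simp
next
  fix z assume "\<exists>y. abel_sol A B C y \<and> y 0 = x 0 \<and> y 1 = z"
  then obtain y where "abel_sol A B C y" "y 0 = x 0" "y 1 = z" by blast
  then show "z = x 1" using abel_sol_unique[OF assms, of y 1] by simp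
qed

lemma abel_sol_nearby:
  assumes x: "abel_sol A B C x"
  obtains \<rho> c where "0 < \<rho>"
    "\<And>\<xi>. \<bar>\<xi> - x 0\<bar> < \<rho> \<Longrightarrow> \<exists>y. abel_sol A B C y \<and> y 0 = \<xi> \<and>
      (\<forall>t\<in>{0..1}. \<bar>y t - x t\<bar> \<le> c * \<bar>\<xi> - x 0\<bar> \<and> \<bar>y t - x t\<bar> \<le> 1)"
proof -
  have cx: "continuous_on {0..1} x" using x by (rule abel_sol_continuous_on)
  \<comment> \<open>The deviation \<open>w = y - x\<close> satisfies a cubic equation with coefficients along \<open>x\<close>.\<close>
  have field: "A t * (x t + w)^3 + B t * (x t + w)\<^sup>2 + C t * (x t + w)
    = (A t * (x t)^3 + B t * (x t)\<^sup>2 + C t * x t)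
      + w * (slope x x t + (3 * A t * x t + B t) * w + A t * w\<^sup>2)"
    for t w unfolding slope_def by (simp add: algebra_simps power2_eq_square power3_eq_cube)
  have cq: "continuous_on {0..1} (\<lambda>t. 3 * A t * x t + B t)"
    by (intro continuous_intros cont_A cont_B cx)
  obtain M where "0 \<le> M" and small: "\<And>\<delta>. \<bar>\<delta>\<bar> < exp (- M) \<Longrightarrow> \<exists>w. w 0 = \<delta> \<and> (\<forall>t\<in>{0..1}.
      (w has_real_derivative w t * (slope x x t + (3 * A t * x t + B t) * w t + A t * (w t)\<^sup>2)) (at t within {0..1})
      \<and> \<bar>w t\<bar> \<le> exp M * \<bar>\<delta>\<bar>)"
    using cubic_ode_small_solutions[OF continuous_on_slope[OF cx cx] cq cont_A] by blast
  show ?thesis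
  proof (rule that[of "exp (- M)" "exp M"])
    fix \<xi> assume \<xi>: "\<bar>\<xi> - x 0\<bar> < exp (- M)"
    then obtain w where w0: "w 0 = \<xi> - x 0" and w: "\<forall>t\<in>{0..1}.
      (w has_real_derivative w t * (slope x x t + (3 * A t * x t + B t) * w t + A t * (w t)\<^sup>2)) (at t within {0..1})
      \<and> \<bar>w t\<bar> \<le> exp M * \<bar>\<xi> - x 0\<bar>"
      using small by blast
    have "exp M * \<bar>\<xi> - x 0\<bar> \<le> 1"
      using \<xi> by (simp add: exp_minus field_simps)
    moreover have "abel_sol A B C (\<lambda>t. x t + w t)"
      unfolding abel_sol_def field
    proof
      fix t :: real assume t: "t \<in> {0..1}"
      show "((\<lambda>t. x t + w t) has_real_derivative A t * x t ^ 3 + B t * (x t)\<^sup>2 + C t * x t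
        + w t * (slope x x t + (3 * A t * x t + B t) * w t + A t * (w t)\<^sup>2)) (at t within {0..1})"
        using DERIV_add[OF x[unfolded abel_sol_def, rule_format, OF t]
            conjunct1[OF w[rule_format, OF t]]] .
    qed
    ultimately show "\<exists>y. abel_sol A B C y \<and> y 0 = \<xi> \<and>
      (\<forall>t\<in>{0..1}. \<bar>y t - x t\<bar> \<le> exp M * \<bar>\<xi> - x 0\<bar> \<and> \<bar>y t - x t\<bar> \<le> 1)"
      using w w0 by (intro exI[of _ "\<lambda>t. x t + w t"]) force
  qed simp
qed

lemma slope_integral_estimate:
  assumes x: "abel_sol A B C x" and y: "abel_sol A B C y"
    and Q: "\<And>t. t \<in> {0..1} \<Longrightarrow> \<bar>A t\<bar> * (3 * \<bar>x t\<bar> + 1) + \<bar>B t\<bar> \<le> Q"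
    and d: "\<And>t. t \<in> {0..1} \<Longrightarrow> \<bar>y t - x t\<bar> \<le> d" "\<And>t. t \<in> {0..1} \<Longrightarrow> \<bar>y t - x t\<bar> \<le> 1"
  shows "\<bar>integral {0..1} (slope x y) - integral {0..1} (slope x x)\<bar> \<le> Q * d"
proof -
  have cx: "continuous_on {0..1} x" and cy: "continuous_on {0..1} y"
    using x y by (auto intro: abel_sol_continuous_on)
  have bound: "\<bar>slope x y s - slope x x s\<bar> \<le> Q * d" if s: "s \<in> {0..1}" for s
  proof -
    have "\<bar>y s - x s + 3 * x s\<bar> \<le> 3 * \<bar>x s\<bar> + 1" using d(2)[OF s] by (smt (verit))
    then have "\<bar>A s\<bar> * \<bar>y s - x s + 3 * x s\<bar> \<le> \<bar>A s\<bar> * (3 * \<bar>x s\<bar> + 1)" by (rule mult_left_mono) simp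
    then have "\<bar>A s * (y s - x s + 3 * x s) + B s\<bar> \<le> \<bar>A s\<bar> * (3 * \<bar>x s\<bar> + 1) + \<bar>B s\<bar>"
      using abs_triangle_ineq[of "A s * (y s - x s + 3 * x s)" "B s"] unfolding abs_mult by linarith
    also have "\<dots> \<le> Q" by (rule Q[OF s])
    finally have "\<bar>y s - x s\<bar> * \<bar>A s * (y s - x s + 3 * x s) + B s\<bar> \<le> d * Q"
      using d(1)[OF s] by (intro mult_mono) auto
    moreover have "slope x y s - slope x x s = (y s - x s) * (A s * (y s - x s + 3 * x s) + B s)"
      unfolding slope_def by (simp add: algebra_simps power2_eq_square)
    ultimately show ?thesis by (simp add: abs_mult mult.commute)
  qed
  have integrable: "slope x y integrable_on {0..1}" "slope x x integrable_on {0..1}"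
    by (intro integrable_continuous_real continuous_on_slope cx cy)+
  have "norm (integral {0..1} (\<lambda>s. slope x y s - slope x x s)) \<le> integral {0..1} (\<lambda>_::real. Q * d)"
  proof (rule Henstock_Kurzweil_Integration.integral_norm_bound_integral)
    show "(\<lambda>s. slope x y s - slope x x s) integrable_on {0..1}"
      using integrable by (rule integrable_diff)
  qed (use bound in auto)
  moreover have "integral {0..1} (\<lambda>s. slope x y s - slope x x s)
      = integral {0..1} (slope x y) - integral {0..1} (slope x x)"
    by (rule integral_diff[OF integrable])
  ultimately show ?thesis by simp
qed

lemma poincare_difference_quotient:
  assumes "abel_sol A B C x" "abel_sol A B C y" "y 0 \<noteq> x 0"
  shows "(poincare A B C (y 0) - poincare A B C (x 0)) / (y 0 - x 0)
    = exp (integral {0..1} (slope x y))"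
  using abel_sol_diff_eq[OF assms(1,2), of 1] poincare_eq[OF assms(1)] poincare_eq[OF assms(2)]
    assms(3) by simp

lemma poincare_has_derivative:
  assumes x: "abel_sol A B C x"
  shows "(poincare A B C has_real_derivative exp (integral {0..1} (slope x x))) (at (x 0))"
proof -
  have cx: "continuous_on {0..1} x" using x by (rule abel_sol_continuous_on)
  obtain \<rho> c where \<rho>: "0 < \<rho>" and nearby: "\<And>\<xi>. \<bar>\<xi> - x 0\<bar> < \<rho> \<Longrightarrow> \<exists>y. abel_sol A B C y \<and> y 0 = \<xi> \<and>
      (\<forall>t\<in>{0..1}. \<bar>y t - x t\<bar> \<le> c * \<bar>\<xi> - x 0\<bar> \<and> \<bar>y t - x t\<bar> \<le> 1)"
    using abel_sol_nearby[OF x] by metis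
  have "continuous_on {0..1} (\<lambda>t. \<bar>A t\<bar> * (3 * \<bar>x t\<bar> + 1) + \<bar>B t\<bar>)"
    by (intro continuous_intros cont_A cont_B cx)
  then obtain Q where Q: "\<And>t. t \<in> {0..1} \<Longrightarrow> norm (\<bar>A t\<bar> * (3 * \<bar>x t\<bar> + 1) + \<bar>B t\<bar>) \<le> Q"
    using continuous_on_compact_bound[OF compact_Icc] by blast
  define Y where "Y \<xi> = (SOME y. abel_sol A B C y \<and> y 0 = \<xi> \<and>
      (\<forall>t\<in>{0..1}. \<bar>y t - x t\<bar> \<le> c * \<bar>\<xi> - x 0\<bar> \<and> \<bar>y t - x t\<bar> \<le> 1))" for \<xi>
  define J where "J \<xi> = integral {0..1} (slope x (Y \<xi>))" for \<xi>
  have Y: "abel_sol A B C (Y \<xi>) \<and> Y \<xi> 0 = \<xi> \<and>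
      (\<forall>t\<in>{0..1}. \<bar>Y \<xi> t - x t\<bar> \<le> c * \<bar>\<xi> - x 0\<bar> \<and> \<bar>Y \<xi> t - x t\<bar> \<le> 1)"
    if "\<bar>\<xi> - x 0\<bar> < \<rho>" for \<xi>
    unfolding Y_def by (rule someI_ex[OF nearby[OF that]])
  have quotient: "(poincare A B C \<xi> - poincare A B C (x 0)) / (\<xi> - x 0) = exp (J \<xi>)"
    if "\<bar>\<xi> - x 0\<bar> < \<rho>" "\<xi> \<noteq> x 0" for \<xi>
    using poincare_difference_quotient[OF x, of "Y \<xi>"] Y[OF that(1)] that(2) by (simp add: J_def)
  have "\<bar>J \<xi> - integral {0..1} (slope x x)\<bar> \<le> Q * (c * \<bar>\<xi> - x 0\<bar>)" if "\<bar>\<xi> - x 0\<bar> < \<rho>" for \<xi>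
    unfolding J_def using Y[OF that] Q by (intro slope_integral_estimate[OF x]) auto
  then have "\<forall>\<^sub>F \<xi> in at (x 0). norm (J \<xi> - integral {0..1} (slope x x)) \<le> Q * (c * \<bar>\<xi> - x 0\<bar>)"
    unfolding eventually_at using \<rho> by (intro exI[of _ \<rho>]) (auto simp: dist_real_def)
  moreover have "((\<lambda>\<xi>. Q * (c * \<bar>\<xi> - x 0\<bar>)) \<longlongrightarrow> 0) (at (x 0))"
    by (intro tendsto_eq_intros) auto
  ultimately have "(J \<longlongrightarrow> integral {0..1} (slope x x)) (at (x 0))"
    by (subst LIM_zero_iff[symmetric]) (rule Lim_null_comparison)
  then have "((\<lambda>\<xi>. exp (J \<xi>)) \<longlongrightarrow> exp (integral {0..1} (slope x x))) (at (x 0))"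
    by (rule tendsto_exp)
  moreover have "\<forall>\<^sub>F \<xi> in at (x 0). exp (J \<xi>) = (poincare A B C \<xi> - poincare A B C (x 0)) / (\<xi> - x 0)"
    unfolding eventually_at using \<rho> quotient by (intro exI[of _ \<rho>]) (auto simp: dist_real_def)
  ultimately show ?thesis
    unfolding has_field_derivative_iff by (rule Lim_transform_eventually)
qed

lemma abel_sol_eq_exp:
  assumes "abel_sol A B C x" "t \<in> {0..1}"
  shows "x t = x 0 * exp (integral {0..t} (\<lambda>s. A s * (x s)\<^sup>2 + B s * x s + C s))"
  by (rule linear_ode_solution_eq[OF _ abel_sol_linear_form[OF assms(1)] assms(2)])
    (intro continuous_intros cont_A cont_B cont_C abel_sol_continuous_on[OF assms(1)])

lemma abel_sol_eq_0_iff: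
  assumes "abel_sol A B C x" "t \<in> {0..1}"
  shows "x t = 0 \<longleftrightarrow> x 0 = 0"
  using abel_sol_eq_exp[OF assms] by simp

lemma nonzero_on01_iff:
  assumes "abel_sol A B C x"
  shows "nonzero_on01 x \<longleftrightarrow> x 0 \<noteq> 0"
proof
  assume "nonzero_on01 x"
  then obtain t where "t \<in> {0..1}" "x t \<noteq> 0" unfolding nonzero_on01_def by blast
  then show "x 0 \<noteq> 0" using abel_sol_eq_0_iff[OF assms] by blast
next
  assume "x 0 \<noteq> 0"
  then show "nonzero_on01 x" unfolding nonzero_on01_def by (intro bexI[of _ 0]) simp_all
qed

lemma periodic_abel_sol_integral_0:
  assumes "abel_sol A B C x" "x 1 = x 0" "x 0 \<noteq> 0"
  shows "((\<lambda>s. A s * (x s)\<^sup>2 + B s * x s + C s) has_integral 0) {0..1}"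
  by (rule linear_ode_periodic_integral_0[OF _ abel_sol_linear_form[OF assms(1)] assms(2,3)])
    (intro continuous_intros cont_A cont_B cont_C abel_sol_continuous_on[OF assms(1)])

definition linear_flow :: "real \<Rightarrow> real" where
  "linear_flow t = exp (integral {0..t} C)"

lemma linear_flow_has_real_derivative:
  "t \<in> {0..1} \<Longrightarrow> (linear_flow has_real_derivative C t * linear_flow t) (at t within {0..1})"
  unfolding linear_flow_def[abs_def] by (rule exp_integral_has_real_derivative[OF cont_C])

lemma continuous_on_linear_flow: "continuous_on {0..1} linear_flow"
  using linear_flow_has_real_derivative by (rule DERIV_continuous_on)

lemma linear_flow_0: "linear_flow 0 = 1"
  by (simp add: linear_flow_def)

lemma linear_flow_pos: "0 < linear_flow t"
  by (simp add: linear_flow_def)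

lemma nonzero_periodic_orbit_iff:
  "periodic_orbit A B C x \<and> nonzero_on01 x \<longleftrightarrow> abel_sol A B C x \<and> x 1 = x 0 \<and> x 0 \<noteq> 0"
  using nonzero_on01_iff[of x] by (auto simp: periodic_orbit_def)

end

section \<open>Periodic orbits under the sign condition\<close>

locale abel_sign_condition = continuous_abel +
  fixes a b :: real
  assumes mean_C: "integral {0..1} C = 0"
    and sign_condition: "\<And>t. t \<in> {0..1} \<Longrightarrow> 0 \<le> a * A t * exp (integral {0..t} C) + b * B t"
    and nontriviality: "\<exists>t\<in>{0..1}. a * A t * exp (integral {0..t} C) + b * B t \<noteq> 0"
begin

definition weight :: "real \<Rightarrow> real" where
  "weight t = a * A t * linear_flow t + b * B t"

lemma weight_nonneg: "t \<in> {0..1} \<Longrightarrow> 0 \<le> weight t"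
  using sign_condition by (simp add: weight_def linear_flow_def)

lemma weight_nonzero: "\<exists>t\<in>{0..1}. weight t \<noteq> 0"
  using nontriviality by (simp add: weight_def linear_flow_def)

lemma continuous_on_weight: "continuous_on {0..1} weight"
  unfolding weight_def by (intro continuous_intros cont_A cont_B continuous_on_linear_flow)

lemma linear_flow_1: "linear_flow 1 = 1"
  using mean_C by (simp add: linear_flow_def)

definition transversal_quantity :: "(real \<Rightarrow> real) \<Rightarrow> real \<Rightarrow> real" where
  "transversal_quantity x t =
    (b * x t - a * linear_flow t) * exp (- integral {0..t} (\<lambda>\<tau>. C \<tau> + A \<tau> * (x \<tau>)\<^sup>2))"

lemma transversal_quantity_increasing:
  assumes x: "abel_sol A B C x" and x0: "x 0 \<noteq> 0"
  defines "s \<equiv> transversal_quantity x"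
  shows "s 0 < s 1" and "t \<in> {0..1} \<Longrightarrow> s 0 \<le> s t \<and> s t \<le> s 1"
proof -
  have cx: "continuous_on {0..1} x" using x by (rule abel_sol_continuous_on)
  define p where "p \<tau> = C \<tau> + A \<tau> * (x \<tau>)\<^sup>2" for \<tau>
  have cp: "continuous_on {0..1} p" unfolding p_def by (intro continuous_intros cont_A cont_C cx)
  define r where "r t = (x t)\<^sup>2 * weight t * exp (- integral {0..t} p)" for t
  \<comment> \<open>\<open>(b x - a E)' = p (b x - a E) + x\<^sup>2 weight\<close>, with \<open>E = linear_flow\<close>.\<close>
  have "(s has_real_derivative r t) (at t within {0..1})" if t: "t \<in> {0..1}" for t
  proof -
    have "((\<lambda>t. b * x t - a * linear_flow t) has_real_derivative
        b * (A t * x t ^ 3 + B t * (x t)\<^sup>2 + C t * x t) - a * (C t * linear_flow t))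
        (at t within {0..1})"
      by (intro DERIV_diff DERIV_cmult x[unfolded abel_sol_def, rule_format, OF t]
          linear_flow_has_real_derivative t)
    from DERIV_mult[OF this exp_neg_integral_has_real_derivative[OF cp t]]
    show ?thesis unfolding s_def transversal_quantity_def[abs_def] p_def[symmetric]
      by (rule DERIV_cong)
        (simp add: r_def p_def weight_def algebra_simps power2_eq_square power3_eq_cube)
  qed
  moreover have "continuous_on {0..1} r" unfolding r_def
    by (intro continuous_intros cx continuous_on_weight indefinite_integral_continuous_1
        integrable_continuous_real cp)
  moreover have "0 \<le> r t" if "t \<in> {0..1}" for t
    unfolding r_def using weight_nonneg[OF that] by simp
  moreover have "\<exists>t\<in>{0..1}. r t \<noteq> 0"
  proof -
    obtain t where t: "t \<in> {0..1}" "weight t \<noteq> 0" using weight_nonzero by blast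
    moreover have "x t \<noteq> 0" using abel_sol_eq_0_iff[OF x t(1)] x0 by simp
    ultimately show ?thesis unfolding r_def by auto
  qed
  ultimately show "s 0 < s 1" and "t \<in> {0..1} \<Longrightarrow> s 0 \<le> s t \<and> s t \<le> s 1"
    using nonneg_derivative_endpoint_bounds[of s r] by blast+
qed

lemma periodic_transversal_quantity_endpoints:
  assumes "x 1 = x 0"
  shows "transversal_quantity x 0 = b * x 0 - a"
    and "transversal_quantity x 1
      = (b * x 0 - a) * exp (- integral {0..1} (\<lambda>\<tau>. C \<tau> + A \<tau> * (x \<tau>)\<^sup>2))"
  using assms by (simp_all add: transversal_quantity_def linear_flow_0 linear_flow_1)

lemma periodic_abel_sol_transversal:
  assumes x: "abel_sol A B C x" "x 1 = x 0" "x 0 \<noteq> 0" and t: "t \<in> {0..1}"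
  shows "b * x t - a * linear_flow t \<noteq> 0"
proof -
  define P where "P = integral {0..1} (\<lambda>\<tau>. C \<tau> + A \<tau> * (x \<tau>)\<^sup>2)"
  note increasing = transversal_quantity_increasing[OF x(1,3)]
  note ends = periodic_transversal_quantity_endpoints[OF x(2), folded P_def]
  have "b * x 0 - a \<noteq> 0" using increasing(1) ends by auto
  then have "0 < (b * x 0 - a)\<^sup>2 * exp (- P)" by simp
  then have "0 < transversal_quantity x 0 * transversal_quantity x 1"
    unfolding ends by (simp add: power2_eq_square mult.assoc)
  \<comment> \<open>the increasing quantity has endpoint values of the same sign, so it cannot vanish in between\<close>
  then have "transversal_quantity x t \<noteq> 0"
    using increasing(2)[OF t] by (smt (verit, best) mult_nonneg_nonpos mult_nonpos_nonneg)
  then show ?thesis by (simp add: transversal_quantity_def)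
qed

lemma periodic_abel_sol_exponent_nonzero:
  assumes x: "abel_sol A B C x" "x 1 = x 0" "x 0 \<noteq> 0"
  shows "integral {0..1} (\<lambda>\<tau>. C \<tau> + A \<tau> * (x \<tau>)\<^sup>2) \<noteq> 0"
  using transversal_quantity_increasing(1)[OF x(1,3)] periodic_transversal_quantity_endpoints[OF x(2)]
  by auto

lemma periodic_abel_sol_fraction_integral_0:
  assumes x: "abel_sol A B C x" "x 1 = x 0" "x 0 \<noteq> 0"
  shows "((\<lambda>t. (linear_flow t)\<^sup>2 * (A t * x t + B t) / (b * x t - a * linear_flow t))
    has_integral 0) {0..1}"
proof -
  have cx: "continuous_on {0..1} x" using x(1) by (rule abel_sol_continuous_on)
  have xnz: "x t \<noteq> 0" if "t \<in> {0..1}" for t using abel_sol_eq_0_iff[OF x(1) that] x(3) by simp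
  define u where "u t = - linear_flow t / x t" for t
  define u' where "u' t = linear_flow t * (A t * x t + B t)" for t
  have "(u has_real_derivative u' t) (at t within {0..1})" if t: "t \<in> {0..1}" for t
    using DERIV_minus[OF DERIV_divide[OF linear_flow_has_real_derivative[OF t]
          x(1)[unfolded abel_sol_def, rule_format, OF t] xnz[OF t]]]
    unfolding u_def[abs_def] minus_divide_left[symmetric]
    by (rule DERIV_cong)
      (use xnz[OF t] in \<open>simp add: u'_def field_simps power2_eq_square power3_eq_cube\<close>)
  moreover have "continuous_on {0..1} u'"
    unfolding u'_def by (intro continuous_intros continuous_on_linear_flow cont_A cont_B cx)
  moreover have "u 1 = u 0" using x(2) by (simp add: u_def linear_flow_0 linear_flow_1)
  moreover have "b + a * u t = (b * x t - a * linear_flow t) / x t" if "t \<in> {0..1}" for t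
    using xnz[OF that] by (simp add: u_def field_simps)
  then have nz: "b + a * u t \<noteq> 0" if "t \<in> {0..1}" for t
    using periodic_abel_sol_transversal[OF x that] xnz[OF that] that by simp
  ultimately have "((\<lambda>t. u t * u' t / (b + a * u t)) has_integral 0) {0..1}"
    by (rule periodic_fraction_has_integral_0)
  from has_integral_neg[OF this] have "((\<lambda>t. - (u t * u' t / (b + a * u t))) has_integral 0) {0..1}"
    by simp
  then show ?thesis
  proof (rule has_integral_eq[rotated])
    fix t :: real assume t: "t \<in> {0..1}"
    with xnz[OF t] periodic_abel_sol_transversal[OF x t]
    show "- (u t * u' t / (b + a * u t))
      = (linear_flow t)\<^sup>2 * (A t * x t + B t) / (b * x t - a * linear_flow t)"
      by (simp add: u_def u'_def field_simps power2_eq_square)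
  qed
qed

lemma periodic_abel_sol_unique:
  assumes x: "abel_sol A B C x" "x 1 = x 0" "x 0 \<noteq> 0"
    and y: "abel_sol A B C y" "y 1 = y 0" "y 0 \<noteq> 0"
    and t: "t \<in> {0..1}"
  shows "x t = y t"
proof (rule ccontr)
  assume "x t \<noteq> y t"
  then have "y 0 \<noteq> x 0" using abel_sol_unique[OF x(1) y(1) _ t] by auto
  then have dnz: "y s - x s \<noteq> 0" if "s \<in> {0..1}" for s
    using abel_sol_diff_eq[OF x(1) y(1) that] by simp
  have cx: "continuous_on {0..1} x" and cy: "continuous_on {0..1} y"
    using x(1) y(1) by (auto intro: abel_sol_continuous_on)
  define mx where "mx s = b * x s - a * linear_flow s" for s
  define my where "my s = b * y s - a * linear_flow s" for s
  have mx: "mx s \<noteq> 0" and my: "my s \<noteq> 0" if "s \<in> {0..1}" for s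
    using periodic_abel_sol_transversal[OF x that] periodic_abel_sol_transversal[OF y that]
    by (simp_all add: mx_def my_def)
  define g where "g s = (linear_flow s)\<^sup>2 * (y s - x s) / (mx s * my s)" for s
  have "((\<lambda>s. g s * weight s) has_integral 0 - 0) {0..1}"
    using has_integral_diff[OF periodic_abel_sol_fraction_integral_0[OF x]
        periodic_abel_sol_fraction_integral_0[OF y]]
  proof (rule has_integral_eq[rotated])
    fix s :: real assume s: "s \<in> {0..1}"
    with mx[OF s] my[OF s]
    show "(linear_flow s)\<^sup>2 * (A s * x s + B s) / (b * x s - a * linear_flow s)
        - (linear_flow s)\<^sup>2 * (A s * y s + B s) / (b * y s - a * linear_flow s) = g s * weight s"
      by (simp add: g_def mx_def my_def weight_def field_simps power2_eq_square)
  qed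
  moreover have "continuous_on {0..1} g"
    unfolding g_def mx_def my_def
    by (intro continuous_intros continuous_on_linear_flow cx cy)
      (use mx my in \<open>auto simp: mx_def my_def\<close>)
  moreover have "g s \<noteq> 0" if "s \<in> {0..1}" for s
    using dnz[OF that] mx[OF that] my[OF that] linear_flow_pos[of s] by (simp add: g_def)
  ultimately have "0 - 0 \<noteq> (0::real)"
    using has_integral_nonzero_if_weighted[OF zero_less_one _ continuous_on_weight _
        weight_nonneg weight_nonzero]
    by blast
  then show False by simp
qed

lemma periodic_abel_sol_hyperbolic:
  assumes x: "abel_sol A B C x" "x 1 = x 0" "x 0 \<noteq> 0"
  shows "integral {0..1} (slope x x) \<noteq> 0"
proof -
  have cx: "continuous_on {0..1} x" using x(1) by (rule abel_sol_continuous_on)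
  define P where "P = integral {0..1} (\<lambda>\<tau>. C \<tau> + A \<tau> * (x \<tau>)\<^sup>2)"
  have "((\<lambda>\<tau>. C \<tau> + A \<tau> * (x \<tau>)\<^sup>2) has_integral P) {0..1}"
    unfolding P_def
    by (intro integrable_integral integrable_continuous_real continuous_intros cont_A cont_C cx)
  moreover have "(C has_integral 0) {0..1}"
    using integrable_integral[OF integrable_continuous_real[OF cont_C]] mean_C by simp
  \<comment> \<open>\<open>slope x x = 2 (A x\<^sup>2 + B x + C) + (C + A x\<^sup>2) - 2 C\<close>\<close>
  ultimately have "((\<lambda>\<tau>. 2 * (A \<tau> * (x \<tau>)\<^sup>2 + B \<tau> * x \<tau> + C \<tau>) + (C \<tau> + A \<tau> * (x \<tau>)\<^sup>2) - 2 * C \<tau>)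
      has_integral (2 * 0 + P - 2 * 0)) {0..1}"
    by (intro has_integral_diff has_integral_add has_integral_mult_right
        periodic_abel_sol_integral_0[OF x])
  then have "(slope x x has_integral (2 * 0 + P - 2 * 0)) {0..1}"
    by (rule has_integral_eq[rotated]) (simp add: slope_def algebra_simps power2_eq_square)
  then show ?thesis
    using periodic_abel_sol_exponent_nonzero[OF x] by (simp add: P_def integral_unique)
qed

end

lemma abel_sign_condition_wlog:
  assumes "continuous_abel A B C" "integral {0..1} C = 0"
    and "\<exists>t\<in>{0..1}. a * A t * exp (integral {0..t} C) + b * B t \<noteq> 0"
    and "(\<forall>t\<in>{0..1}. a * A t * exp (integral {0..t} C) + b * B t \<ge> 0)
       \<or> (\<forall>t\<in>{0..1}. a * A t * exp (integral {0..t} C) + b * B t \<le> 0)"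
  obtains a' b' where "abel_sign_condition A B C a' b'"
proof (cases "\<forall>t\<in>{0..1}. a * A t * exp (integral {0..t} C) + b * B t \<ge> 0")
  case True
  with assms(1-3) show ?thesis
    by (intro that[of a b]) (simp add: abel_sign_condition_def abel_sign_condition_axioms_def)
next
  case False
  with assms(4) have "\<forall>t\<in>{0..1}. 0 \<le> (- a) * A t * exp (integral {0..t} C) + (- b) * B t" by auto
  moreover from assms(3) obtain t where "t \<in> {0..1}" "a * A t * exp (integral {0..t} C) + b * B t \<noteq> 0"
    by blast
  then have "\<exists>t\<in>{0..1}. (- a) * A t * exp (integral {0..t} C) + (- b) * B t \<noteq> 0"
    by (intro bexI[of _ t]) auto
  ultimately show ?thesis using assms(1,2)
    by (intro that[of "- a" "- b"]) (simp add: abel_sign_condition_def abel_sign_condition_axioms_def)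
qed

theorem theorem5p1:
  fixes A B C :: "real \<Rightarrow> real" and a b :: real
  assumes "smooth_on {0..1} A" and "smooth_on {0..1} B" and "smooth_on {0..1} C"
    and "integral {0..1} C = 0"
    and "\<exists>t\<in>{0..1}. a * A t * exp (integral {0..t} C) + b * B t \<noteq> 0"
    and "(\<forall>t\<in>{0..1}. a * A t * exp (integral {0..t} C) + b * B t \<ge> 0)
       \<or> (\<forall>t\<in>{0..1}. a * A t * exp (integral {0..t} C) + b * B t \<le> 0)"
  shows "(\<forall>x y. periodic_orbit A B C x \<and> nonzero_on01 x \<and> periodic_orbit A B C y \<and> nonzero_on01 y
            \<longrightarrow> (\<forall>t\<in>{0..1}. x t = y t))
       \<and> (\<forall>x. periodic_orbit A B C x \<and> nonzero_on01 x \<longrightarrow>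
            (\<exists>D. (poincare A B C has_real_derivative D) (at (x 0)) \<and> D \<noteq> 1))"
proof -
  have "continuous_abel A B C"
    using assms(1-3) by unfold_locales (auto intro: smooth_on_imp_continuous_on)
  then obtain a' b' where "abel_sign_condition A B C a' b'"
    using assms(4-6) by (rule abel_sign_condition_wlog)
  then interpret abel_sign_condition A B C a' b' .
  show ?thesis
  proof (intro conjI allI impI ballI)
    fix x y :: "real \<Rightarrow> real" and t :: real
    assume "periodic_orbit A B C x \<and> nonzero_on01 x \<and> periodic_orbit A B C y \<and> nonzero_on01 y"
      and "t \<in> {0..1}"
    then show "x t = y t" using periodic_abel_sol_unique nonzero_periodic_orbit_iff by metis
  next
    fix x assume "periodic_orbit A B C x \<and> nonzero_on01 x"
    then have x: "abel_sol A B C x" "x 1 = x 0" "x 0 \<noteq> 0"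
      by (simp_all add: nonzero_periodic_orbit_iff)
    show "\<exists>D. (poincare A B C has_real_derivative D) (at (x 0)) \<and> D \<noteq> 1"
      using poincare_has_derivative[OF x(1)] periodic_abel_sol_hyperbolic[OF x] by auto
  qed
qed

end
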